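(* Let $Q_5$ be the edge graph of the $5$-dimensional hypercube (vertices $\{0,1\}^5$, two vertices adjacent iff they differ in exactly one coordinate). Up to a permutation of the colours (simultaneous permutation of rows and columns of the colour adjacency matrix), the colour adjacency matrices of perfect $2$-colourings of $Q_5$ are exactly the six matrices \[ \begin{pmatrix} 0 & 5 \\ 5 & 0 \end{pmatrix}, \begin{pmatrix} 1 & 4 \\ 4 & 1 \end{pmatrix}, \begin{pmatrix} 2 & 3 \\ 1 & 4 \end{pmatrix}, \begin{pmatrix} 2 & 3 \\ 3 & 2 \end{pmatrix}, \begin{pmatrix} 3 & 2 \\ 2 & 3 \end{pmatrix}, \begin{pmatrix} 4 & 1 \\ 1 & 4 \end{pmatrix}, \] and the colour adjacency matrices of perfect $3$-colourings of $Q_5$ are exactly the eight matrices \[ \begin{pmatrix} 0 & 1 & 4 \\ 1 & 0 & 4 \\ 2 & 2 & 1 \end{pmatrix}, \begin{pmatrix} 0 & 3 & 2 \\ 3 & 0 & 2 \\ 1 & 1 & 3 \end{pmatrix}, \begin{pmatrix} 0 & 5 & 0 \\ 1 & 0 & 4 \\ 0 & 2 & 3 \end{pmatrix}, \begin{pmatrix} 1 & 0 & 4 \\ 0 & 1 & 4 \\ 1 & 3 & 1 \end{pmatrix}, \begin{pmatrix} 1 & 0 & 4 \\ 0 & 1 & 4 \\ 2 & 2 & 1 \end{pmatrix}, \begin{pmatrix} 1 & 2 & 2 \\ 2 & 1 & 2 \\ 1 & 1 & 3 \end{pmatrix}, \begin{pmatrix} 2 & 1 & 2 \\ 1 & 2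 & 2 \\ 1 & 1 & 3 \end{pmatrix}, \begin{pmatrix} 3 & 0 & 2 \\ 0 & 3 & 2 \\ 1 & 1 & 3 \end{pmatrix}. \] In particular each of these matrices is realized by some perfect colouring of $Q_5$.
   Context: An $m$-colouring of a graph $G=(V,E)$ is a partition of $V$ into $m$ disjoint nonempty sets $V_1,\dots,V_m$ (the colours; adjacent vertices may have the same colour). It is perfect if for all $i,j$ every vertex of colour $i$ has the same number $a_{ij}$ of neighbours of colour $j$; the matrix $A=(a_{ij})$ is its colour adjacency matrix. Relabelling colours by a permutation $\sigma$ replaces $A$ by $(a_{\sigma(i)\sigma(j)})$. *)

theory Defs
  imports Main "HOL-Combinatorics.Permutations"
begin

definition Q5V :: "bool list set" where
  "Q5V = {xs. length xs = 5}"

definition Q5adj :: "bool list \<Rightarrow> bool list \<Rightarrow> bool" where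
  "Q5adj xs ys \<longleftrightarrow> card {i. i < 5 \<and> xs ! i \<noteq> ys ! i} = 1"

definition colouring :: "nat \<Rightarrow> (bool list \<Rightarrow> nat) \<Rightarrow> bool" where
  "colouring m c \<longleftrightarrow> c ` Q5V = {..<m}"

definition perfect_with_matrix :: "nat \<Rightarrow> (bool list \<Rightarrow> nat) \<Rightarrow> (nat \<Rightarrow> nat \<Rightarrow> nat) \<Rightarrow> bool" where
  "perfect_with_matrix m c A \<longleftrightarrow> colouring m c \<and>
     (\<forall>i<m. \<forall>j<m. \<forall>v\<in>Q5V. c v = i \<longrightarrow> card {w\<in>Q5V. Q5adj v w \<and> c w = j} = A i j)"

definition mat :: "nat list list \<Rightarrow> nat \<Rightarrow> nat \<Rightarrow> nat" where
  "mat B i j = B ! i ! j"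

definition classified_by :: "nat \<Rightarrow> nat list list list \<Rightarrow> bool" where
  "classified_by m L \<longleftrightarrow>
     (\<forall>c A. perfect_with_matrix m c A \<longrightarrow>
        (\<exists>\<sigma>. \<sigma> permutes {..<m} \<and> (\<exists>B\<in>set L. \<forall>i<m. \<forall>j<m. A (\<sigma> i) (\<sigma> j) = mat B i j))) \<and>
     (\<forall>B\<in>set L. \<exists>c. perfect_with_matrix m c (mat B))"

end

theory Submission
  imports Defs "HOL-Combinatorics.Multiset_Permutations"
begin

text \<open>
  Let \<open>c\<close> be a perfect colouring with matrix \<open>A\<close>, let \<open>v\<close> be a vertex and let \<open>x\<^sub>k(j)\<close> be the
  number of vertices of colour \<open>j\<close> at distance \<open>k\<close> from \<open>v\<close>. Counting the edges between this
  sphere and a colour class in two ways gives \<open>x\<^sub>k A = (k + 1) x\<^sub>k\<^sub>+\<^sub>1 + (6 - k) x\<^sub>k\<^sub>-\<^sub>1\<close>, so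
  \<open>x\<^sub>0\<close>, the indicator of \<open>c v\<close>, determines all \<open>x\<^sub>k\<close> from \<open>A\<close> alone. They must be natural
  numbers with \<open>x\<^sub>6 = 0\<close>, and their sums, the class sizes \<open>n\<^sub>j\<close>, must be positive and satisfy
  \<open>n\<^sub>i a\<^sub>i\<^sub>j = n\<^sub>j a\<^sub>j\<^sub>i\<close>. Evaluating this test on every matrix with row sums 5 leaves, up to
  renaming colours, the listed matrices and the two-colour matrix \<open>((0, 5), (3, 2))\<close>. The latter
  would make a colour class an independent set that every other vertex meets exactly three times,
  which a local argument rules out. Each listed matrix is realised by an explicit colouring.
\<close>

definition flip :: "nat \<Rightarrow> bool list \<Rightarrow> bool list" where
  "flip i v = v[i := \<not> v ! i]"

lemma length_flip [simp]: "length (flip i v) = length v"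
  by (simp add: flip_def)

lemma flip_in_Q5V: "v \<in> Q5V \<Longrightarrow> flip i v \<in> Q5V"
  by (simp add: Q5V_def)

lemma nth_flip: "i < length v \<Longrightarrow> flip i v ! j = (if j = i then \<not> v ! i else v ! j)"
  by (simp add: flip_def nth_list_update)

lemma flip_flip [simp]: "flip i (flip i v) = v"
  by (cases "i < length v") (simp_all add: flip_def list_update_beyond)

lemma flip_commute: "flip i (flip j v) = flip j (flip i v)"
  by (cases "i = j") (auto simp: flip_def nth_list_update list_update_swap)

lemma Q5V_eq_n_lists: "Q5V = set (List.n_lists 5 [False, True])"
  unfolding Q5V_def set_n_lists by auto

lemma finite_Q5V [simp]: "finite Q5V"
  by (simp add: Q5V_eq_n_lists)

lemma Q5adj_sym: "Q5adj v w \<longleftrightarrow> Q5adj w v"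
  unfolding Q5adj_def by (simp only: eq_commute)

lemma Q5adj_iff_flip:
  assumes "v \<in> Q5V" "w \<in> Q5V"
  shows "Q5adj v w \<longleftrightarrow> (\<exists>i<5. w = flip i v)"
proof
  assume "Q5adj v w"
  then obtain i where "{i. i < 5 \<and> v ! i \<noteq> w ! i} = {i}"
    unfolding Q5adj_def by (meson card_1_singletonE)
  then have i: "i < 5" and differ: "\<And>j. j < 5 \<Longrightarrow> v ! j \<noteq> w ! j \<longleftrightarrow> j = i"
    by blast+
  have "w = flip i v"
  proof (rule nth_equalityI)
    show "length w = length (flip i v)"
      using assms by (simp add: Q5V_def)
    fix j assume "j < length w"
    then show "w ! j = flip i v ! j"
      using assms differ[of j] i by (cases "j = i") (auto simp: Q5V_def nth_flip)
  qed
  then show "\<exists>i<5. w = flip i v"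
    using i by blast
next
  assume "\<exists>i<5. w = flip i v"
  then obtain i where "i < 5" "w = flip i v" by blast
  then have "{j. j < 5 \<and> v ! j \<noteq> w ! j} = {i}"
    using assms by (auto simp: Q5V_def nth_flip)
  then show "Q5adj v w" by (simp add: Q5adj_def)
qed

lemma inj_on_flip:
  assumes "v \<in> Q5V"
  shows "inj_on (\<lambda>i. flip i v) {..<5}"
proof (rule inj_onI)
  fix i j :: nat
  assume "i \<in> {..<5}" "j \<in> {..<5}" "flip i v = flip j v"
  moreover have "flip i v ! i \<noteq> v ! i"
    using \<open>i \<in> {..<5}\<close> assms by (simp add: Q5V_def nth_flip)
  ultimately show "i = j"
    using \<open>j \<in> {..<5}\<close> assms by (auto simp: Q5V_def nth_flip split: if_splits)
qed

lemma card_neighbours: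
  assumes "v \<in> Q5V"
  shows "card {w \<in> Q5V. Q5adj v w \<and> P w} = card {i. i < 5 \<and> P (flip i v)}"
proof -
  have "{w \<in> Q5V. Q5adj v w \<and> P w} = (\<lambda>i. flip i v) ` {i. i < 5 \<and> P (flip i v)}"
    using Q5adj_iff_flip[OF assms] flip_in_Q5V[OF assms] by auto
  moreover have "inj_on (\<lambda>i. flip i v) {i. i < 5 \<and> P (flip i v)}"
    by (rule inj_on_subset[OF inj_on_flip[OF assms]]) auto
  ultimately show ?thesis by (simp add: card_image)
qed

text \<open>Both sides count the edges between the vertex sets given by \<open>P\<close> and \<open>Q\<close>.\<close>

lemma sum_card_flip_swap:
  "(\<Sum>u\<in>{u \<in> Q5V. P u}. card {i. i < 5 \<and> Q (flip i u)}) =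
   (\<Sum>w\<in>{w \<in> Q5V. Q w}. card {i. i < 5 \<and> P (flip i w)})"
proof -
  have edges: "(\<Sum>u\<in>{u \<in> Q5V. P u}. card {i. i < 5 \<and> Q (flip i u)}) =
      card {(u, w). u \<in> Q5V \<and> w \<in> Q5V \<and> Q5adj u w \<and> P u \<and> Q w}" for P Q
  proof -
    have "(\<Sum>u\<in>{u \<in> Q5V. P u}. card {i. i < 5 \<and> Q (flip i u)}) =
        (\<Sum>u\<in>{u \<in> Q5V. P u}. card {w \<in> Q5V. Q5adj u w \<and> Q w})"
      by (intro sum.cong) (simp_all add: card_neighbours)
    also have "\<dots> = card (SIGMA u:{u \<in> Q5V. P u}. {w \<in> Q5V. Q5adj u w \<and> Q w})"
      by simp
    also have "(SIGMA u:{u \<in> Q5V. P u}. {w \<in> Q5V. Q5adj u w \<and> Q w}) =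
        {(u, w). u \<in> Q5V \<and> w \<in> Q5V \<and> Q5adj u w \<and> P u \<and> Q w}"
      by auto
    finally show ?thesis .
  qed
  have "{(u, w). u \<in> Q5V \<and> w \<in> Q5V \<and> Q5adj u w \<and> P u \<and> Q w} =
      prod.swap ` {(w, u). w \<in> Q5V \<and> u \<in> Q5V \<and> Q5adj w u \<and> Q w \<and> P u}"
    using Q5adj_sym by auto
  then show ?thesis
    by (simp add: edges card_image)
qed

definition Q5dist :: "bool list \<Rightarrow> bool list \<Rightarrow> nat" where
  "Q5dist v w = card {i. i < 5 \<and> v ! i \<noteq> w ! i}"

lemma Q5dist_le: "Q5dist v w \<le> 5"
  unfolding Q5dist_def using card_mono[of "{..<5::nat}" "{i. i < 5 \<and> v ! i \<noteq> w ! i}"] by auto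

lemma Q5dist_eq_0_iff:
  assumes "v \<in> Q5V" "w \<in> Q5V"
  shows "Q5dist v w = 0 \<longleftrightarrow> w = v"
  using assms by (auto simp: Q5dist_def Q5V_def intro: nth_equalityI)

lemma Q5dist_flip:
  assumes "u \<in> Q5V" "i < 5"
  shows "Q5dist v (flip i u) = (if v ! i = u ! i then Suc (Q5dist v u) else Q5dist v u - 1)"
proof -
  let ?D = "{j. j < 5 \<and> v ! j \<noteq> u ! j}"
  have "{j. j < 5 \<and> v ! j \<noteq> flip i u ! j} = (if v ! i = u ! i then insert i ?D else ?D - {i})"
    using assms by (auto simp: Q5V_def nth_flip)
  then show ?thesis
    using assms(2) by (simp add: Q5dist_def)
qed

lemma card_flip_Q5dist:
  assumes "u \<in> Q5V"
  shows "card {i. i < 5 \<and> Q5dist v (flip i u) = k} =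
    (if k = Suc (Q5dist v u) then 5 - Q5dist v u else 0) + (if Q5dist v u = Suc k then Suc k else 0)"
proof -
  let ?d = "Q5dist v u"
  define agree where "agree = {i. i < 5 \<and> v ! i = u ! i}"
  define differ where "differ = {i. i < 5 \<and> v ! i \<noteq> u ! i}"
  have partition: "agree \<union> differ = {..<5}" "agree \<inter> differ = {}"
    by (auto simp: agree_def differ_def)
  have finite: "finite agree" "finite differ"
    by (simp_all add: agree_def differ_def)
  have card_differ: "card differ = ?d"
    by (simp add: Q5dist_def differ_def)
  have "card agree + card differ = 5"
    using card_Un_disjoint[OF finite partition(2)] partition(1) by simp
  then have card_agree: "card agree = 5 - ?d"
    using card_differ by simp
  have d_pos: "?d \<noteq> 0" if "i \<in> differ" for i
    using that card_differ finite(2) card_gt_0_iff[of differ] by auto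
  have "{i. i < 5 \<and> Q5dist v (flip i u) = k} =
      (if k = Suc ?d then agree else {}) \<union> (if ?d = Suc k then differ else {})"
  proof (rule set_eqI)
    fix i
    show "i \<in> {i. i < 5 \<and> Q5dist v (flip i u) = k} \<longleftrightarrow>
        i \<in> (if k = Suc ?d then agree else {}) \<union> (if ?d = Suc k then differ else {})"
    proof (cases "i < 5")
      case True
      then show ?thesis
        using Q5dist_flip[OF assms True] d_pos[of i]
        by (cases "v ! i = u ! i") (auto simp: agree_def differ_def)
    qed (simp add: agree_def differ_def)
  qed
  then show ?thesis
    using partition(2) finite card_agree card_differ by (simp add: card_Un_disjoint)
qed

lemma perfect_colour_less: "perfect_with_matrix m c A \<Longrightarrow> v \<in> Q5V \<Longrightarrow> c v < m"
  unfolding perfect_with_matrix_def colouring_def by auto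

lemma perfect_colour_class_nonempty:
  assumes "perfect_with_matrix m c A" "i < m"
  shows "\<exists>v\<in>Q5V. c v = i"
proof -
  have "i \<in> c ` Q5V"
    using assms by (simp add: perfect_with_matrix_def colouring_def)
  then show ?thesis by blast
qed

lemma perfect_card_colour_class_pos:
  "perfect_with_matrix m c A \<Longrightarrow> i < m \<Longrightarrow> 0 < card {w \<in> Q5V. c w = i}"
  using perfect_colour_class_nonempty by (fastforce simp: card_gt_0_iff)

lemma perfect_neighbour_count:
  assumes "perfect_with_matrix m c A" "v \<in> Q5V" "j < m"
  shows "card {i. i < 5 \<and> c (flip i v) = j} = A (c v) j"
proof -
  have "card {w \<in> Q5V. Q5adj v w \<and> c w = j} = A (c v) j"
    using assms perfect_colour_less[OF assms(1,2)] unfolding perfect_with_matrix_def by blast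
  then show ?thesis
    using card_neighbours[OF assms(2)] by simp
qed

lemma perfect_row_sum:
  assumes P: "perfect_with_matrix m c A" and "i < m"
  shows "(\<Sum>j<m. A i j) = 5"
proof -
  obtain v where v: "v \<in> Q5V" "c v = i"
    using perfect_colour_class_nonempty[OF assms] by blast
  have "(\<Sum>j<m. A i j) = (\<Sum>j<m. card {k. k < 5 \<and> c (flip k v) = j})"
    using perfect_neighbour_count[OF P v(1)] v(2) by simp
  also have "\<dots> = 5"
    using sum_fun_comp[of "{..<5::nat}" "{..<m}" "\<lambda>k. c (flip k v)" "\<lambda>_. 1::nat"]
      perfect_colour_less[OF P flip_in_Q5V[OF v(1)]]
    by (simp add: image_subset_iff)
  finally show ?thesis .
qed

lemma perfect_double_count:
  assumes P: "perfect_with_matrix m c A" and "i < m" "j < m"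
  shows "card {w \<in> Q5V. c w = i} * A i j = card {w \<in> Q5V. c w = j} * A j i"
proof -
  have "card {w \<in> Q5V. c w = i} * A i j =
      (\<Sum>u\<in>{u \<in> Q5V. c u = i}. card {k. k < 5 \<and> c (flip k u) = j})" if "j < m" for i j
    using perfect_neighbour_count[OF P _ \<open>j < m\<close>] by simp
  then show ?thesis
    using sum_card_flip_swap[of "\<lambda>u. c u = i" "\<lambda>w. c w = j"] assms(2,3) by simp
qed

lemma perfect_zero_sym:
  assumes "perfect_with_matrix m c A" "i < m" "j < m"
  shows "A i j = 0 \<longleftrightarrow> A j i = 0"
proof -
  have "card {w \<in> Q5V. c w = i} \<noteq> 0" "card {w \<in> Q5V. c w = j} \<noteq> 0"
    using perfect_card_colour_class_pos[OF assms(1)] assms(2,3) by (simp_all only: neq0_conv)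
  then show ?thesis
    using perfect_double_count[OF assms] by auto
qed

section \<open>Colours on spheres\<close>

definition sphere_count :: "(bool list \<Rightarrow> nat) \<Rightarrow> bool list \<Rightarrow> nat \<Rightarrow> nat \<Rightarrow> nat" where
  "sphere_count c v k j = card {w \<in> Q5V. Q5dist v w = k \<and> c w = j}"

lemma sphere_count_0: "v \<in> Q5V \<Longrightarrow> sphere_count c v 0 j = of_bool (c v = j)"
proof -
  assume "v \<in> Q5V"
  then have "{w \<in> Q5V. Q5dist v w = 0 \<and> c w = j} = (if c v = j then {v} else {})"
    using Q5dist_eq_0_iff by auto
  then show ?thesis by (simp add: sphere_count_def)
qed

lemma sphere_count_beyond: "5 < k \<Longrightarrow> sphere_count c v k j = 0"
  by (simp add: sphere_count_def) (metis Q5dist_le leD)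

lemma sum_sphere_count: "(\<Sum>k\<le>5. sphere_count c v k j) = card {w \<in> Q5V. c w = j}"
  using sum_fun_comp[of "{w \<in> Q5V. c w = j}" "{..5}" "Q5dist v" "\<lambda>_. 1::nat"] Q5dist_le[of v]
  by (simp add: sphere_count_def image_subset_iff conj_ac)

lemma sphere_count_recurrence:
  assumes P: "perfect_with_matrix m c A" and v: "v \<in> Q5V" and "j < m"
  shows "(\<Sum>l<m. sphere_count c v k l * A l j) =
    Suc k * sphere_count c v (Suc k) j + (if k = 0 then 0 else (6 - k) * sphere_count c v (k - 1) j)"
proof -
  let ?S = "{u \<in> Q5V. Q5dist v u = k}" and ?C = "{w \<in> Q5V. c w = j}"
  have count: "(\<Sum>w\<in>?C. of_bool (Q5dist v w = i)) = sphere_count c v i j" for i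
    by (simp add: sphere_count_def Int_def conj_ac)
  have "(\<Sum>l<m. sphere_count c v k l * A l j) = (\<Sum>u\<in>?S. A (c u) j)"
    using sum_fun_comp[of ?S "{..<m}" c "\<lambda>l. A l j"] perfect_colour_less[OF P]
    by (simp add: sphere_count_def image_subset_iff conj_ac)
  also have "\<dots> = (\<Sum>u\<in>?S. card {i. i < 5 \<and> c (flip i u) = j})"
    using perfect_neighbour_count[OF P _ \<open>j < m\<close>] by simp
  also have "\<dots> = (\<Sum>w\<in>?C. card {i. i < 5 \<and> Q5dist v (flip i w) = k})"
    using sum_card_flip_swap[of "\<lambda>u. Q5dist v u = k" "\<lambda>w. c w = j"] by simp
  also have "\<dots> = (\<Sum>w\<in>?C. Suc k * of_bool (Q5dist v w = Suc k) +
      (if k = 0 then 0 else (6 - k) * of_bool (Q5dist v w = k - 1)))"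
  proof (rule sum.cong[OF refl])
    fix w assume "w \<in> ?C"
    then show "card {i. i < 5 \<and> Q5dist v (flip i w) = k} = Suc k * of_bool (Q5dist v w = Suc k) +
        (if k = 0 then 0 else (6 - k) * of_bool (Q5dist v w = k - 1))"
      by (cases k) (auto simp: card_flip_Q5dist)
  qed
  also have "\<dots> = Suc k * sphere_count c v (Suc k) j +
      (if k = 0 then 0 else (6 - k) * sphere_count c v (k - 1) j)"
    using count by (cases k) (simp_all add: sum.distrib flip: sum_distrib_left)
  finally show ?thesis .
qed

section \<open>The sphere test\<close>

definition matrix_rows :: "nat \<Rightarrow> (nat \<Rightarrow> nat \<Rightarrow> nat) \<Rightarrow> nat list list" where
  "matrix_rows m A = map (\<lambda>i. map (A i) [0..<m]) [0..<m]"

definition unit_vec :: "nat \<Rightarrow> nat \<Rightarrow> nat list" where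
  "unit_vec m i = map (\<lambda>j. of_bool (j = i)) [0..<m]"

definition vec_mat :: "nat list \<Rightarrow> nat list list \<Rightarrow> nat list" where
  "vec_mat x B = map (\<lambda>j. sum_list (map2 (\<lambda>a r. a * r ! j) x B)) [0..<length B]"

text \<open>The recurrence \<open>sphere_count_recurrence\<close> solved for the next sphere, if possible in \<open>\<nat>\<close>.\<close>

definition next_sphere :: "nat list list \<Rightarrow> nat \<Rightarrow> nat list \<Rightarrow> nat list \<Rightarrow> nat list option" where
  "next_sphere B k p x =
     (let a = vec_mat x B; y = map2 (\<lambda>a b. (a - (6 - k) * b) div Suc k) a p in
      if map2 (\<lambda>y b. Suc k * y + (6 - k) * b) y p = a then Some y else None)"

fun sphere_sum :: "nat list list \<Rightarrow> nat \<Rightarrow> nat \<Rightarrow> nat list \<Rightarrow> nat list \<Rightarrow> nat list option" where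
  "sphere_sum B 0 k p x = (if x = replicate (length B) 0 then Some x else None)"
| "sphere_sum B (Suc n) k p x =
     (case next_sphere B k p x of
        None \<Rightarrow> None
      | Some y \<Rightarrow> map_option (map2 (+) x) (sphere_sum B n (Suc k) x y))"

definition sphere_test :: "nat list list \<Rightarrow> nat \<Rightarrow> bool" where
  "sphere_test B i \<longleftrightarrow>
    (case sphere_sum B 6 0 (replicate (length B) 0) (unit_vec (length B) i) of
       None \<Rightarrow> False
     | Some t \<Rightarrow> (\<forall>j<length B. 0 < t ! j) \<and>
                 (\<forall>j<length B. \<forall>l<length B. t ! j * B ! j ! l = t ! l * B ! l ! j))"

definition feasible :: "nat list list \<Rightarrow> bool" where
  "feasible B \<longleftrightarrow> (\<forall>i<length B. sphere_test B i)"

lemma vec_mat_matrix_rows: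
  assumes "length x = m"
  shows "vec_mat x (matrix_rows m A) = map (\<lambda>j. \<Sum>l<m. x ! l * A l j) [0..<m]"
proof -
  have "map2 (\<lambda>a r. a * r ! j) x (matrix_rows m A) = map (\<lambda>l. x ! l * A l j) [0..<m]"
    if "j < m" for j
    using assms that by (intro nth_equalityI) (simp_all add: matrix_rows_def)
  then show ?thesis
    by (simp add: vec_mat_def matrix_rows_def atLeast0LessThan flip: sum_set_upt_conv_sum_list_nat)
qed

context
  fixes m c A v
  assumes perfect: "perfect_with_matrix m c A" and v: "v \<in> Q5V"
begin

definition sphere_profile :: "nat \<Rightarrow> nat list" where
  "sphere_profile k = map (sphere_count c v k) [0..<m]"

definition prev_profile :: "nat \<Rightarrow> nat list" where
  "prev_profile k = (if k = 0 then replicate m 0 else sphere_profile (k - 1))"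

lemma next_sphere_profile:
  "next_sphere (matrix_rows m A) k (prev_profile k) (sphere_profile k) = Some (sphere_profile (Suc k))"
proof -
  have "vec_mat (sphere_profile k) (matrix_rows m A) =
      map2 (\<lambda>y b. Suc k * y + (6 - k) * b) (sphere_profile (Suc k)) (prev_profile k)"
    by (intro nth_equalityI)
       (auto simp: vec_mat_matrix_rows sphere_profile_def prev_profile_def
         sphere_count_recurrence[OF perfect v])
  moreover have "map2 (\<lambda>a b. (a - (6 - k) * b) div Suc k)
      (map2 (\<lambda>y b. Suc k * y + (6 - k) * b) (sphere_profile (Suc k)) (prev_profile k)) (prev_profile k) =
      sphere_profile (Suc k)"
    by (intro nth_equalityI) (auto simp: sphere_profile_def prev_profile_def simp del: mult_Suc)
  ultimately show ?thesis
    by (simp add: next_sphere_def Let_def)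
qed

lemma sphere_sum_profile:
  "n + k = 6 \<Longrightarrow> sphere_sum (matrix_rows m A) n k (prev_profile k) (sphere_profile k) =
     Some (map (\<lambda>j. \<Sum>q\<in>{k..6}. sphere_count c v q j) [0..<m])"
proof (induction n arbitrary: k)
  case 0
  then show ?case
    by (auto simp: sphere_profile_def sphere_count_beyond matrix_rows_def intro: nth_equalityI)
next
  case (Suc n)
  then have "prev_profile (Suc k) = sphere_profile k"
    by (simp add: prev_profile_def)
  then have "sphere_sum (matrix_rows m A) n (Suc k) (sphere_profile k) (sphere_profile (Suc k)) =
      Some (map (\<lambda>j. \<Sum>q\<in>{Suc k..6}. sphere_count c v q j) [0..<m])"
    using Suc.IH[of "Suc k"] Suc.prems by simp
  moreover have "map2 (+) (sphere_profile k) (map (\<lambda>j. \<Sum>q\<in>{Suc k..6}. sphere_count c v q j) [0..<m]) =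
      map (\<lambda>j. \<Sum>q\<in>{k..6}. sphere_count c v q j) [0..<m]"
    using Suc.prems by (intro nth_equalityI) (auto simp: sphere_profile_def sum.atLeast_Suc_atMost)
  ultimately show ?case
    by (simp add: next_sphere_profile)
qed

lemma sphere_sum_class_sizes:
  "sphere_sum (matrix_rows m A) 6 0 (replicate m 0) (unit_vec m (c v)) =
     Some (map (\<lambda>j. card {w \<in> Q5V. c w = j}) [0..<m])"
proof -
  have "unit_vec m (c v) = sphere_profile 0"
    by (intro nth_equalityI) (auto simp: unit_vec_def sphere_profile_def sphere_count_0[OF v])
  moreover have "(\<Sum>q\<in>{0..6}. sphere_count c v q j) = card {w \<in> Q5V. c w = j}" for j
  proof -
    have "{0..6} = insert 6 {..5::nat}"
      by auto
    then show ?thesis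
      using sum_sphere_count[of c v j] by (simp add: sphere_count_beyond)
  qed
  ultimately show ?thesis
    using sphere_sum_profile[of 6 0] by (simp add: prev_profile_def)
qed

end

lemma feasible_perfect:
  assumes P: "perfect_with_matrix m c A"
  shows "feasible (matrix_rows m A)"
  unfolding feasible_def
proof (intro allI impI)
  fix i assume "i < length (matrix_rows m A)"
  then have "i < m"
    by (simp add: matrix_rows_def)
  then obtain v where v: "v \<in> Q5V" "c v = i"
    using perfect_colour_class_nonempty[OF P] by blast
  show "sphere_test (matrix_rows m A) i"
    using sphere_sum_class_sizes[OF P v(1)] v(2) perfect_card_colour_class_pos[OF P]
      perfect_double_count[OF P]
    by (simp add: sphere_test_def matrix_rows_def)
qed

section \<open>Enumerating candidate matrices\<close>

definition candidate_rows :: "nat \<Rightarrow> nat list list" where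
  "candidate_rows m = filter (\<lambda>r. sum_list r = 5) (List.n_lists m [0..<6])"

definition permute_matrix :: "nat list \<Rightarrow> nat list list \<Rightarrow> nat list list" where
  "permute_matrix s B = map (\<lambda>i. map (\<lambda>j. B ! (s ! i) ! (s ! j)) [0..<length B]) [0..<length B]"

definition listed_up_to_perm :: "nat list list list \<Rightarrow> nat list list \<Rightarrow> bool" where
  "listed_up_to_perm L B \<longleftrightarrow>
     (\<exists>s\<in>set (permutations_of_set_list [0..<length B]). permute_matrix s B \<in> set L)"

text \<open>The conditionals below (rather than implications) make evaluation by \<open>code_simp\<close> skip the
  second branch when the condition fails, instead of evaluating it symbolically.\<close>

definition candidate_classified :: "nat list list list \<Rightarrow> nat list list list \<Rightarrow> nat list list \<Rightarrow> bool" where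
  "candidate_classified L E B \<longleftrightarrow> (if feasible B then B \<in> set E \<or> listed_up_to_perm L B else True)"

definition row_compatible :: "nat list list \<Rightarrow> nat list \<Rightarrow> bool" where
  "row_compatible P r \<longleftrightarrow> (\<forall>j<length P. r ! j = 0 \<longleftrightarrow> P ! j ! length P = 0)"

fun all_completions_classified ::
  "nat list list list \<Rightarrow> nat list list list \<Rightarrow> nat list list \<Rightarrow> nat \<Rightarrow> nat list list \<Rightarrow> bool" where
  "all_completions_classified L E R 0 P = candidate_classified L E P"
| "all_completions_classified L E R (Suc n) P =
     (\<forall>r\<in>set R. if row_compatible P r then all_completions_classified L E R n (P @ [r]) else True)"

lemma all_completions_classified_sound:
  assumes "all_completions_classified L E R n P" "length Q = n" "set Q \<subseteq> set R"
    and "\<forall>i<length (P @ Q). \<forall>j<length (P @ Q). (P @ Q) ! i ! j = 0 \<longleftrightarrow> (P @ Q) ! j ! i = 0"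
  shows "candidate_classified L E (P @ Q)"
  using assms
proof (induction n arbitrary: P Q)
  case 0
  then show ?case by simp
next
  case (Suc n)
  then obtain r Q' where Q: "Q = r # Q'"
    by (cases Q) auto
  have "row_compatible P r"
    unfolding row_compatible_def
  proof (intro allI impI)
    fix j assume "j < length P"
    moreover have "length P < length (P @ Q)"
      using Q by simp
    ultimately have "(P @ Q) ! length P ! j = 0 \<longleftrightarrow> (P @ Q) ! j ! length P = 0"
      using Suc.prems(4) by simp
    then show "r ! j = 0 \<longleftrightarrow> P ! j ! length P = 0"
      using \<open>j < length P\<close> Q by (simp add: nth_append)
  qed
  then have "all_completions_classified L E R n (P @ [r])"
    using Suc.prems(1,3) Q by auto
  then show ?case
    using Suc.IH[of "P @ [r]" Q'] Suc.prems Q by simp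
qed

lemma matrix_rows_in_candidate_rows:
  assumes P: "perfect_with_matrix m c A"
  shows "set (matrix_rows m A) \<subseteq> set (candidate_rows m)"
proof
  fix r assume "r \<in> set (matrix_rows m A)"
  then obtain i where i: "i < m" and r: "r = map (A i) [0..<m]"
    by (auto simp: matrix_rows_def)
  have row_sum: "(\<Sum>j<m. A i j) = 5"
    by (rule perfect_row_sum[OF P i])
  then have "A i j < 6" if "j < m" for j
    using member_le_sum[of j "{..<m}" "A i"] that by simp
  then show "r \<in> set (candidate_rows m)"
    using row_sum by (auto simp: candidate_rows_def r set_n_lists atLeast0LessThan
      simp flip: sum_set_upt_conv_sum_list_nat)
qed

lemma listed_up_to_perm_matrix_rows:
  assumes "listed_up_to_perm L (matrix_rows m A)"
  shows "\<exists>\<sigma>. \<sigma> permutes {..<m} \<and> (\<exists>B\<in>set L. \<forall>i<m. \<forall>j<m. A (\<sigma> i) (\<sigma> j) = mat B i j)"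
proof -
  obtain s where s: "s \<in> set (permutations_of_set_list [0..<m])"
    and B: "permute_matrix s (matrix_rows m A) \<in> set L"
    using assms unfolding listed_up_to_perm_def by (auto simp: matrix_rows_def)
  then have "s \<in> permutations_of_set (set [0..<m])"
    by (simp only: permutations_of_list distinct_remdups_id distinct_upt)
  then have "set s = set [0..<m]" "distinct s"
    by (rule permutations_of_setD)+
  then have "mset s = mset [0..<m]"
    using set_eq_iff_mset_eq_distinct[of s "[0..<m]"] by simp
  then obtain \<sigma> where \<sigma>: "\<sigma> permutes {..<m}" "permute_list \<sigma> [0..<m] = s"
    using mset_eq_permutation by (metis length_upt minus_nat.diff_0)
  have \<sigma>_less: "\<sigma> i < m" if "i < m" for i
    using permutes_in_image[OF \<sigma>(1), of i] that by simp
  moreover have "s ! i = \<sigma> i" if "i < m" for i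
    using \<sigma>(2) that \<sigma>_less[OF that] by (auto simp: permute_list_def)
  ultimately have "A (\<sigma> i) (\<sigma> j) = mat (permute_matrix s (matrix_rows m A)) i j" if "i < m" "j < m" for i j
    using that by (simp add: mat_def permute_matrix_def matrix_rows_def)
  then show ?thesis
    using \<sigma>(1) B by blast
qed

lemma perfect_matrix_listed:
  assumes "all_completions_classified L E (candidate_rows m) m []" and P: "perfect_with_matrix m c A"
    and "matrix_rows m A \<notin> set E"
  shows "\<exists>\<sigma>. \<sigma> permutes {..<m} \<and> (\<exists>B\<in>set L. \<forall>i<m. \<forall>j<m. A (\<sigma> i) (\<sigma> j) = mat B i j)"
proof -
  have "candidate_classified L E ([] @ matrix_rows m A)"
    using assms(1) matrix_rows_in_candidate_rows[OF P] perfect_zero_sym[OF P]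
    by (intro all_completions_classified_sound) (auto simp: matrix_rows_def)
  then have "listed_up_to_perm L (matrix_rows m A)"
    using feasible_perfect[OF P] assms(3) by (simp add: candidate_classified_def)
  then show ?thesis
    by (rule listed_up_to_perm_matrix_rows)
qed

section \<open>An infeasible two-colour matrix\<close>

context
  fixes S :: "bool list set"
  assumes independent: "\<And>v i. v \<in> Q5V \<Longrightarrow> v \<in> S \<Longrightarrow> i < 5 \<Longrightarrow> flip i v \<notin> S"
    and thrice: "\<And>v. v \<in> Q5V \<Longrightarrow> v \<notin> S \<Longrightarrow> card {i. i < 5 \<and> flip i v \<in> S} = 3"
begin

text \<open>The three neighbours in \<open>S\<close> of \<open>w = flip b u\<close> avoid the directions \<open>b\<close> and \<open>a\<close> (\<open>flip a w\<close>
  is a neighbour of \<open>flip a u \<in> S\<close>), so they are the \<open>flip i w\<close> with \<open>i \<notin> {a, b}\<close>, and their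
  neighbours \<open>flip i u\<close> lie outside \<open>S\<close>.\<close>

lemma met_thrice_only_two_directions:
  assumes u: "u \<in> Q5V" "u \<notin> S" and "a < 5" "b < 5" "a \<noteq> b"
    and "flip a u \<in> S" "flip b u \<notin> S" and i: "i < 5" "i \<noteq> a" "i \<noteq> b"
  shows "flip i u \<notin> S"
proof -
  define w where "w = flip b u"
  have w: "w \<in> Q5V" "w \<notin> S"
    using u \<open>flip b u \<notin> S\<close> by (simp_all add: w_def flip_in_Q5V)
  have "flip b w \<notin> S" "flip a w \<notin> S"
    using u independent[OF flip_in_Q5V[OF u(1)] \<open>flip a u \<in> S\<close> \<open>b < 5\<close>]
    by (simp_all add: w_def flip_commute[of a b])
  then have "{j. j < 5 \<and> flip j w \<in> S} \<subseteq> {..<5} - {a, b}"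
    by auto
  moreover have "card ({..<5} - {a, b}) = card {j. j < 5 \<and> flip j w \<in> S}"
    using thrice[OF w] \<open>a < 5\<close> \<open>b < 5\<close> \<open>a \<noteq> b\<close> by simp
  ultimately have "{j. j < 5 \<and> flip j w \<in> S} = {..<5} - {a, b}"
    by (intro card_subset_eq) auto
  then have "flip i w \<in> S"
    using i by auto
  then have "flip b (flip i w) \<notin> S"
    using independent[OF flip_in_Q5V[OF w(1)]] \<open>b < 5\<close> by blast
  then show ?thesis
    by (simp add: w_def flip_commute[of b i])
qed

lemma no_independent_set_met_thrice: "Q5V \<inter> S = {}"
proof (rule ccontr)
  assume "Q5V \<inter> S \<noteq> {}"
  then obtain v where v: "v \<in> Q5V" "v \<in> S" by blast
  define u where "u = flip 0 v"
  have u: "u \<in> Q5V" "u \<notin> S" "flip 0 u \<in> S"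
    using v independent[OF v] by (simp_all add: u_def flip_in_Q5V)
  define N where "N = {i. i < 5 \<and> flip i u \<in> S}"
  have "card N = 3"
    using thrice[OF u(1,2)] by (simp add: N_def)
  have "\<not> {1..<5} \<subseteq> N"
  proof
    assume "{1..<5} \<subseteq> N"
    then have "card {1..<5::nat} \<le> card N"
      by (intro card_mono) (simp_all add: N_def)
    then show False
      using \<open>card N = 3\<close> by simp
  qed
  then obtain b where b: "0 < b" "b < 5" "b \<notin> N"
    by (auto simp: subset_iff Suc_le_eq)
  have "N \<subseteq> {0}"
  proof
    fix i assume "i \<in> N"
    then show "i \<in> {0}"
      using met_thrice_only_two_directions[OF u(1,2), of 0 b i] u(3) b by (auto simp: N_def)
  qed
  then have "card N \<le> 1"
    using card_mono[of "{0}" N] by simp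
  then show False
    using \<open>card N = 3\<close> by simp
qed

end

lemma perfect_no_independent_class_met_thrice:
  assumes P: "perfect_with_matrix m c A" and "a < m" "A a a = 0"
    and thrice: "\<And>b. b < m \<Longrightarrow> b \<noteq> a \<Longrightarrow> A b a = 3"
  shows False
proof -
  have "Q5V \<inter> {w. c w = a} = {}"
  proof (rule no_independent_set_met_thrice)
    fix v and i :: nat
    assume "v \<in> Q5V" "v \<in> {w. c w = a}" "i < 5"
    then show "flip i v \<notin> {w. c w = a}"
      using perfect_neighbour_count[OF P \<open>v \<in> Q5V\<close> \<open>a < m\<close>] \<open>A a a = 0\<close> by auto
  next
    fix v assume "v \<in> Q5V" "v \<notin> {w. c w = a}"
    then show "card {i. i < 5 \<and> flip i v \<in> {w. c w = a}} = 3"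
      using perfect_neighbour_count[OF P \<open>v \<in> Q5V\<close> \<open>a < m\<close>] thrice
        perfect_colour_less[OF P \<open>v \<in> Q5V\<close>] by auto
  qed
  then show False
    using perfect_colour_class_nonempty[OF P \<open>a < m\<close>] by blast
qed

lemma perfect_two_colouring_not_0_5_3_2:
  assumes P: "perfect_with_matrix 2 c A"
  shows "matrix_rows 2 A \<notin> set [[[0,5],[3,2]], [[2,3],[5,0]]]"
proof
  assume "matrix_rows 2 A \<in> set [[[0,5],[3,2]], [[2,3],[5,0]]]"
  then have "A 0 0 = 0 \<and> A 1 0 = 3 \<or> A 1 1 = 0 \<and> A 0 1 = 3"
    by (auto simp: matrix_rows_def upt_rec)
  then show False
  proof
    assume "A 0 0 = 0 \<and> A 1 0 = 3"
    then show False
      by (intro perfect_no_independent_class_met_thrice[OF P, of 0]) (auto simp: less_2_cases_iff)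
  next
    assume "A 1 1 = 0 \<and> A 0 1 = 3"
    then show False
      by (intro perfect_no_independent_class_met_thrice[OF P, of 1]) (auto simp: less_2_cases_iff)
  qed
qed

section \<open>Realisations\<close>

text \<open>The colour of \<open>v\<close> is the entry of the table \<open>t\<close> at \<open>v\<close> read as a binary number, first
  coordinate least significant.\<close>

definition table_colouring :: "nat list \<Rightarrow> bool list \<Rightarrow> nat" where
  "table_colouring t v = t ! horner_sum of_bool 2 v"

definition realised_at :: "nat list \<Rightarrow> nat list list \<Rightarrow> bool list \<Rightarrow> bool" where
  "realised_at t B v \<longleftrightarrow>
     map (\<lambda>j. length (filter (\<lambda>i. table_colouring t (flip i v) = j) [0..<5])) [0..<length B] =
     B ! table_colouring t v"

definition realises :: "nat \<Rightarrow> nat list \<Rightarrow> nat list list \<Rightarrow> bool" where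
  "realises m t B \<longleftrightarrow> length B = m \<and>
     set (map (table_colouring t) (List.n_lists 5 [False, True])) = set [0..<m] \<and>
     list_all (realised_at t B) (List.n_lists 5 [False, True])"

lemma perfect_table_colouring:
  assumes "realises m t B"
  shows "perfect_with_matrix m (table_colouring t) (mat B)"
proof -
  have "colouring m (table_colouring t)"
    using assms by (simp add: realises_def colouring_def Q5V_eq_n_lists atLeast0LessThan)
  moreover have "card {w \<in> Q5V. Q5adj v w \<and> table_colouring t w = j} = mat B (table_colouring t v) j"
    if "v \<in> Q5V" "j < m" for v j
  proof -
    have "map (\<lambda>j. length (filter (\<lambda>i. table_colouring t (flip i v) = j) [0..<5])) [0..<m] =
        B ! table_colouring t v"
      using assms that by (auto simp: realises_def realised_at_def list_all_iff Q5V_eq_n_lists)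
    then have "mat B (table_colouring t v) j = length (filter (\<lambda>i. table_colouring t (flip i v) = j) [0..<5])"
      using that unfolding mat_def by (metis (no_types) add_0 diff_zero nth_map_upt)
    then show ?thesis
      using that by (simp add: card_neighbours length_filter_conv_card cong: conj_cong)
  qed
  ultimately show ?thesis
    by (auto simp: perfect_with_matrix_def)
qed

definition two_colour_tables :: "nat list list" where
  "two_colour_tables =
    [[0,1,1,0,1,0,0,1,1,0,0,1,0,1,1,0,1,0,0,1,0,1,1,0,0,1,1,0,1,0,0,1],
     [0,0,1,1,1,1,0,0,1,1,0,0,0,0,1,1,1,1,0,0,0,0,1,1,0,0,1,1,1,1,0,0],
     [0,0,0,0,1,1,1,1,1,1,1,1,1,1,1,1,1,1,1,1,1,1,1,1,1,1,1,1,0,0,0,0],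
     [0,0,0,0,1,1,1,1,1,1,1,1,0,0,0,0,1,1,1,1,0,0,0,0,0,0,0,0,1,1,1,1],
     [0,0,0,0,0,0,0,0,1,1,1,1,1,1,1,1,1,1,1,1,1,1,1,1,0,0,0,0,0,0,0,0],
     [0,0,0,0,0,0,0,0,0,0,0,0,0,0,0,0,1,1,1,1,1,1,1,1,1,1,1,1,1,1,1,1]]"

definition three_colour_tables :: "nat list list" where
  "three_colour_tables =
    [[0,1,2,2,2,2,0,1,2,2,1,0,1,0,2,2,2,2,1,0,1,0,2,2,0,1,2,2,2,2,0,1],
     [0,1,1,0,1,0,0,1,2,2,2,2,2,2,2,2,2,2,2,2,2,2,2,2,1,0,0,1,0,1,1,0],
     [0,1,1,2,1,2,2,2,1,2,2,2,2,2,2,1,1,2,2,2,2,2,2,1,2,2,2,1,2,1,1,0],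
     [0,0,2,2,2,2,1,1,2,2,1,1,1,1,2,2,2,2,1,1,1,1,2,2,1,1,2,2,2,2,0,0],
     [0,0,2,2,2,2,0,0,2,2,1,1,1,1,2,2,2,2,1,1,1,1,2,2,0,0,2,2,2,2,0,0],
     [0,0,1,1,1,1,0,0,2,2,2,2,2,2,2,2,2,2,2,2,2,2,2,2,1,1,0,0,0,0,1,1],
     [0,0,0,0,1,1,1,1,2,2,2,2,2,2,2,2,2,2,2,2,2,2,2,2,1,1,1,1,0,0,0,0],
     [0,0,0,0,0,0,0,0,2,2,2,2,2,2,2,2,2,2,2,2,2,2,2,2,1,1,1,1,1,1,1,1]]"

lemma classified_byI:
  assumes "all_completions_classified L E (candidate_rows m) m []"
    and "\<And>c A. perfect_with_matrix m c A \<Longrightarrow> matrix_rows m A \<notin> set E"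
    and "list_all2 (realises m) T L"
  shows "classified_by m L"
  unfolding classified_by_def
proof (intro conjI allI impI ballI)
  fix c A assume "perfect_with_matrix m c A"
  then show "\<exists>\<sigma>. \<sigma> permutes {..<m} \<and> (\<exists>B\<in>set L. \<forall>i<m. \<forall>j<m. A (\<sigma> i) (\<sigma> j) = mat B i j)"
    using perfect_matrix_listed[OF assms(1)] assms(2) by blast
next
  fix B assume "B \<in> set L"
  then obtain t where "realises m t B"
    using assms(3) by (auto simp: list_all2_conv_all_nth in_set_conv_nth)
  then show "\<exists>c. perfect_with_matrix m c (mat B)"
    by (blast intro: perfect_table_colouring)
qed

lemma classified_by_two_colours:
  "classified_by 2
     [[[0,5],[5,0]], [[1,4],[4,1]], [[2,3],[1,4]], [[2,3],[3,2]], [[3,2],[2,3]], [[4,1],[1,4]]]"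
proof (rule classified_byI[where E = "[[[0,5],[3,2]], [[2,3],[5,0]]]" and T = two_colour_tables])
  show "matrix_rows 2 A \<notin> set [[[0,5],[3,2]], [[2,3],[5,0]]]" if "perfect_with_matrix 2 c A" for c A
    using that by (rule perfect_two_colouring_not_0_5_3_2)
qed code_simp+

lemma classified_by_three_colours:
  "classified_by 3
     [[[0,1,4],[1,0,4],[2,2,1]], [[0,3,2],[3,0,2],[1,1,3]], [[0,5,0],[1,0,4],[0,2,3]],
      [[1,0,4],[0,1,4],[1,3,1]], [[1,0,4],[0,1,4],[2,2,1]], [[1,2,2],[2,1,2],[1,1,3]],
      [[2,1,2],[1,2,2],[1,1,3]], [[3,0,2],[0,3,2],[1,1,3]]]"
proof (rule classified_byI[where E = "[]" and T = three_colour_tables])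
  show "matrix_rows 3 A \<notin> set []" if "perfect_with_matrix 3 c A" for c A
    by simp
qed code_simp+

theorem theorem6p1:
  shows "classified_by 2
           [[[0,5],[5,0]], [[1,4],[4,1]], [[2,3],[1,4]],
            [[2,3],[3,2]], [[3,2],[2,3]], [[4,1],[1,4]]]
       \<and> classified_by 3
           [[[0,1,4],[1,0,4],[2,2,1]], [[0,3,2],[3,0,2],[1,1,3]],
            [[0,5,0],[1,0,4],[0,2,3]], [[1,0,4],[0,1,4],[1,3,1]],
            [[1,0,4],[0,1,4],[2,2,1]], [[1,2,2],[2,1,2],[1,1,3]],
            [[2,1,2],[1,2,2],[1,1,3]], [[3,0,2],[0,3,2],[1,1,3]]]"
  by (rule conjI[OF classified_by_two_colours classified_by_three_colours])

end
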